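(* Let $(X,d_X,\mu_X)$ be an mm-space with $X=\operatorname{supp}\mu_X$, and assume the 1-measurement $\mathcal M(X;1)$ has a maximum with respect to the Lipschitz order. Then for any two points $x,y\in X$ with $d_X(x,y)=\operatorname{diam}X<\infty$, we have $d_X(x,z)+d_X(z,y)=\operatorname{diam}X$ for every point $z\in X$.
   Context: An mm-space is a triple $(X,d_X,\mu_X)$ where $(X,d_X)$ is a complete separable metric space and $\mu_X$ is a Borel probability measure on $X$. The 1-measurement is $\mathcal M(X;1):=\{f_*\mu_X \mid f:X\to\mathbb R \text{ is 1-Lipschitz}\}$. Two mm-spaces $X,Y$ are mm-isomorphic if there is an isometry $f:\operatorname{supp}\mu_X\to\operatorname{supp}\mu_Y$ with $f_*\mu_X=\mu_Y$. For mm-spaces, $Y\prec X$ (Lipschitz order) if there is a 1-Lipschitz map $f:\operatorname{supp}\mu_X\to\operatorname{supp}\mu_Y$ with $f_*\mu_X=\mu_Y$; a partial order on mm-isomorphism classes. For Borel probability measures $\mu,\nu$ on $\mathbb R$, $\mu\prec\nu$ means $(\mathbb R,|\cdot|,\mu)\prec(\mathbb R,|\cdot|,\nu)$. A maximum of $\mathcal M(X;1)$ is an element $\mu\in\mathcal M(X;1)$ with $\nu\prec\mu$ for all $\nu\in\mathcal M(X;1)$. *)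

theory Defs
  imports "HOL-Probability.Probability"
begin

definition mm_support :: "'a::metric_space measure \<Rightarrow> 'a set" where
  "mm_support M = {x. \<forall>e>0. emeasure M (ball x e) > 0}"

definition lip_prec :: "real measure \<Rightarrow> real measure \<Rightarrow> bool" where
  "lip_prec mu nu \<longleftrightarrow>
     (\<exists>f :: real \<Rightarrow> real. f \<in> borel_measurable borel \<and>
        lipschitz_on 1 (mm_support nu) f \<and>
        f ` mm_support nu \<subseteq> mm_support mu \<and>
        distr nu borel f = mu)"

definition measurement1 :: "'a::metric_space measure \<Rightarrow> real measure set" where
  "measurement1 M = {distr M borel f | f :: 'a \<Rightarrow> real. lipschitz_on 1 UNIV f}"

end

theory Submission
  imports Defs
begin

text \<open>Let \<open>f\<close> be a 1-Lipschitz function whose push-forward \<open>\<mu>\<close> is the maximum of the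
  1-measurement, and \<open>D = d(x, y) = diam X\<close>. For every 1-Lipschitz \<open>h\<close> with \<open>h x = 0\<close> and
  \<open>h y = D\<close>, the 1-Lipschitz map \<open>g\<close> from \<open>supp \<mu>\<close> onto \<open>supp h\<^sub>*\<mu>\<^sub>X\<close> must hit both \<open>0\<close>
  and \<open>D\<close>; since \<open>supp \<mu>\<close> has diameter at most \<open>D\<close>, this forces \<open>g\<close> to be one of the two
  isometries of \<open>supp \<mu>\<close> onto an interval of length \<open>D\<close>. Hence \<open>\<integral> h\<close> takes one of only two
  values. Applying this to \<open>d(x,\<cdot>)\<close>, \<open>D - d(y,\<cdot>)\<close> and their average shows that both have
  the same integral, so the nonnegative continuous function \<open>d(x,\<cdot>) + d(\<cdot>,y) - D\<close> has
  integral zero and therefore vanishes on the support, which is all of \<open>X\<close>.\<close>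

lemma borel_measurable_continuous_on_UNIV:
  assumes "sets M = sets borel" "continuous_on UNIV f"
  shows "f \<in> borel_measurable M"
  using borel_measurable_continuous_onI[OF assms(2)] measurable_cong_sets[OF assms(1) refl]
  by blast

lemma closed_mm_support:
  fixes M :: "'a::metric_space measure"
  assumes "sets M = sets borel"
  shows "closed (mm_support M)"
proof -
  have "t \<in> mm_support M" if t: "t \<in> closure (mm_support M)" for t
    unfolding mm_support_def
  proof (intro CollectI allI impI)
    fix e :: real assume "e > 0"
    then obtain u where u: "u \<in> mm_support M" "dist u t < e/2"
      using t unfolding closure_approachable by (metis half_gt_zero)
    have "0 < emeasure M (ball u (e/2))"
      using u(1) \<open>e > 0\<close> unfolding mm_support_def by auto
    also have "\<dots> \<le> emeasure M (ball t e)"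
      using u(2) assms by (intro emeasure_mono) (auto simp: dist_commute dist_triangle_half_r)
    finally show "0 < emeasure M (ball t e)" .
  qed
  then show ?thesis
    using closure_subset_eq by blast
qed

lemma mm_support_distr_continuous:
  fixes M :: "'a::metric_space measure" and f :: "'a \<Rightarrow> 'b::metric_space"
  assumes sets: "sets M = sets borel" and supp: "mm_support M = UNIV"
    and f: "continuous_on UNIV f"
  shows "f p \<in> mm_support (distr M borel f)"
  unfolding mm_support_def
proof (intro CollectI allI impI)
  fix e :: real assume "e > 0"
  have f_meas: "f \<in> borel_measurable M"
    using borel_measurable_continuous_on_UNIV[OF sets f] .
  obtain d where "d > 0" and d: "\<And>q. dist q p < d \<Longrightarrow> dist (f q) (f p) < e"
    using f \<open>e > 0\<close> unfolding continuous_on_iff by blast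
  have "0 < emeasure M (ball p d)"
    using supp \<open>d > 0\<close> unfolding mm_support_def by blast
  also have "\<dots> \<le> emeasure M (f -` ball (f p) e \<inter> space M)"
    using d sets_eq_imp_space_eq[OF sets] measurable_sets[OF f_meas, of "ball (f p) e"]
    by (intro emeasure_mono) (auto simp: dist_commute)
  also have "\<dots> = emeasure (distr M borel f) (ball (f p) e)"
    by (simp add: emeasure_distr[OF f_meas])
  finally show "0 < emeasure (distr M borel f) (ball (f p) e)" .
qed

lemma mm_support_distr_subset_closure:
  fixes f :: "'a \<Rightarrow> 'b::metric_space"
  assumes f: "f \<in> borel_measurable M"
  shows "mm_support (distr M borel f) \<subseteq> closure (f ` space M)"
proof
  fix t assume t: "t \<in> mm_support (distr M borel f)"
  show "t \<in> closure (f ` space M)"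
    unfolding closure_approachable
  proof (intro allI impI)
    fix e :: real assume "e > 0"
    show "\<exists>u\<in>f ` space M. dist u t < e"
    proof (rule ccontr)
      assume "\<not> ?thesis"
      then have "f -` ball t e \<inter> space M = {}"
        by (auto simp: dist_commute)
      then have "emeasure (distr M borel f) (ball t e) = 0"
        by (simp add: emeasure_distr[OF f])
      then show False
        using t \<open>e > 0\<close> unfolding mm_support_def by auto
    qed
  qed
qed

lemma lipschitz_on_attaining_diameter_affine:
  fixes S :: "real set" and g :: "real \<Rightarrow> real"
  assumes diam: "\<And>u v. u \<in> S \<Longrightarrow> v \<in> S \<Longrightarrow> \<bar>u - v\<bar> \<le> D"
    and g: "lipschitz_on 1 S g"
    and s: "s \<in> S" "g s = 0" and t: "t \<in> S" "g t = D"
  shows "(\<forall>u\<in>S. g u = u - Inf S) \<or> (\<forall>u\<in>S. g u = Inf S + D - u)"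
proof -
  have g_le: "\<bar>g u - g v\<bar> \<le> \<bar>u - v\<bar>" if "u \<in> S" "v \<in> S" for u v
    using lipschitz_onD[OF g that] by (simp add: dist_real_def)
  have st: "\<bar>s - t\<bar> = D"
    using g_le[OF s(1) t(1)] diam[OF s(1) t(1)] s t by simp
  show ?thesis
  proof (cases "s \<le> t")
    case True
    have between: "s \<le> u \<and> u \<le> t" if "u \<in> S" for u
      using diam[OF that s(1)] diam[OF that t(1)] st True by (auto simp: abs_le_iff)
    have "Inf S = s"
      using between s(1) by (intro cInf_eq_minimum) auto
    moreover have "g u = u - s" if "u \<in> S" for u
      using g_le[OF that s(1)] g_le[OF that t(1)] between[OF that] st True s t
      by (auto simp: abs_le_iff)
    ultimately show ?thesis by simp
  next
    case False
    have between: "t \<le> u \<and> u \<le> s" if "u \<in> S" for u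
      using diam[OF that s(1)] diam[OF that t(1)] st False by (auto simp: abs_le_iff)
    have "Inf S = t"
      using between t(1) by (intro cInf_eq_minimum) auto
    moreover have "g u = t + D - u" if "u \<in> S" for u
      using g_le[OF that s(1)] g_le[OF that t(1)] between[OF that] st False s t
      by (auto simp: abs_le_iff)
    ultimately show ?thesis by simp
  qed
qed

lemma lip_prec_attaining_diameter_distr:
  fixes M :: "'a::metric_space measure" and f h :: "'a \<Rightarrow> real"
  defines "c \<equiv> Inf (mm_support (distr M borel f))"
  assumes sets: "sets M = sets borel" and supp: "mm_support M = UNIV"
    and diam: "\<And>p q :: 'a. dist p q \<le> D"
    and f: "lipschitz_on 1 UNIV f" and h: "lipschitz_on 1 UNIV h"
    and hx: "h x = 0" and hy: "h y = D"
    and prec: "lip_prec (distr M borel h) (distr M borel f)"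
  shows "distr M borel h = distr M borel (\<lambda>p. f p - c)
    \<or> distr M borel h = distr M borel (\<lambda>p. c + D - f p)"
proof -
  define S where "S = mm_support (distr M borel f)"
  have space: "space M = UNIV"
    using sets_eq_imp_space_eq[OF sets] by simp
  have f_cont: "continuous_on UNIV f" and h_cont: "continuous_on UNIV h"
    using f h by (auto intro: lipschitz_on_continuous_on)
  have f_meas: "f \<in> borel_measurable M"
    using borel_measurable_continuous_on_UNIV[OF sets f_cont] .
  have f_in_S: "f p \<in> S" for p
    unfolding S_def using mm_support_distr_continuous[OF sets supp f_cont] .
  have S_closure: "S \<subseteq> closure (range f)"
    unfolding S_def using mm_support_distr_subset_closure[OF f_meas] space by simp
  have range_diam: "dist u v \<le> D" if uv: "u \<in> range f" "v \<in> range f" for u v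
  proof -
    obtain p q where "u = f p" "v = f q"
      using uv by blast
    then show ?thesis
      using lipschitz_onD[OF f, of p q] diam[of p q] by simp
  qed
  have range_bounded: "bounded (range f)"
    unfolding bounded_def using range_diam by blast
  have S_diam: "\<bar>u - v\<bar> \<le> D" if "u \<in> S" "v \<in> S" for u v
  proof -
    have "dist u v \<le> diameter (closure (range f))"
      using that S_closure range_bounded by (intro diameter_bounded_bound) auto
    also have "\<dots> = diameter (range f)"
      using diameter_closure[OF range_bounded] .
    also have "\<dots> \<le> D"
      using range_diam diam[of x x] by (intro diameter_le) (auto simp: dist_real_def)
    finally show ?thesis by (simp add: dist_real_def)
  qed
  have S_compact: "compact S"
    unfolding compact_eq_bounded_closed
    using closed_mm_support[of "distr M borel f"] S_closure range_bounded
    by (auto simp: S_def intro: bounded_subset)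
  obtain g where g_meas: "g \<in> borel_measurable borel" and g: "lipschitz_on 1 S g"
    and g_distr: "distr (distr M borel f) borel g = distr M borel h"
    using prec unfolding lip_prec_def S_def by blast
  have h_distr: "distr M borel h = distr M borel (g \<circ> f)"
    using g_distr distr_distr[OF g_meas f_meas] by simp
  have "closed (g ` S)"
    using S_compact g by (intro compact_imp_closed compact_continuous_image lipschitz_on_continuous_on)
  then have h_in_image: "h p \<in> g ` S" for p
  proof -
    have "h p \<in> mm_support (distr M borel (g \<circ> f))"
      using mm_support_distr_continuous[OF sets supp h_cont] h_distr by metis
    also have "\<dots> \<subseteq> closure ((g \<circ> f) ` space M)"
      using mm_support_distr_subset_closure measurable_comp[OF f_meas g_meas] by blast
    also have "\<dots> \<subseteq> g ` S"
      using f_in_S \<open>closed (g ` S)\<close> by (intro closure_minimal) auto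
    finally show ?thesis .
  qed
  obtain s t where "s \<in> S" "g s = 0" "t \<in> S" "g t = D"
    using h_in_image[of x] h_in_image[of y] hx hy by (metis imageE)
  then have "(\<forall>u\<in>S. g u = u - c) \<or> (\<forall>u\<in>S. g u = c + D - u)"
    using lipschitz_on_attaining_diameter_affine[OF S_diam g] unfolding c_def S_def by blast
  then have "g \<circ> f = (\<lambda>p. f p - c) \<or> g \<circ> f = (\<lambda>p. c + D - f p)"
    using f_in_S by auto
  then show ?thesis
    using h_distr by auto
qed

lemma integral_eq_if_distr_eq:
  fixes f g :: "'a \<Rightarrow> real"
  assumes "f \<in> borel_measurable M" "g \<in> borel_measurable M"
    and "distr M borel f = distr M borel g"
  shows "integral\<^sup>L M f = integral\<^sup>L M g"
  using integral_distr[OF assms(1), of "\<lambda>t. t"] integral_distr[OF assms(2), of "\<lambda>t. t"] assms(3)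
  by simp

lemma integrable_lipschitz_on_bounded_space:
  fixes M :: "'a::metric_space measure" and f :: "'a \<Rightarrow> real"
  assumes "finite_measure M" and sets: "sets M = sets borel" and bounded: "bounded (UNIV :: 'a set)"
    and f: "lipschitz_on C UNIV f"
  shows "integrable M f"
proof -
  obtain a e where e: "\<And>p :: 'a. dist a p \<le> e"
    using bounded unfolding bounded_def by (meson UNIV_I)
  have "\<bar>f p\<bar> \<le> \<bar>f a\<bar> + C * e" for p
  proof -
    have "dist (f a) (f p) \<le> C * e"
      using lipschitz_onD[OF f, of a p] mult_left_mono[OF e[of p] lipschitz_on_nonneg[OF f]] by simp
    then show ?thesis by (simp add: dist_real_def)
  qed
  moreover have "f \<in> borel_measurable M"
    using borel_measurable_continuous_on_UNIV[OF sets lipschitz_on_continuous_on[OF f]] .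
  ultimately show ?thesis
    by (intro finite_measure.integrable_const_bound[OF \<open>finite_measure M\<close>, where B="\<bar>f a\<bar> + C * e"]) auto
qed

lemma continuous_nonneg_integral_eq_0_full_support:
  fixes M :: "'a::metric_space measure" and \<phi> :: "'a \<Rightarrow> real"
  assumes sets: "sets M = sets borel" and supp: "mm_support M = UNIV"
    and cont: "continuous_on UNIV \<phi>" and nonneg: "\<And>p. 0 \<le> \<phi> p"
    and int: "integrable M \<phi>" and zero: "integral\<^sup>L M \<phi> = 0"
  shows "\<phi> z = 0"
proof (rule ccontr)
  assume "\<phi> z \<noteq> 0"
  define N where "N = {p. 0 < \<phi> p}"
  have "open N"
    unfolding N_def using open_Collect_less[OF continuous_on_const cont] .
  moreover have "z \<in> N"
    using \<open>\<phi> z \<noteq> 0\<close> nonneg[of z] unfolding N_def by simp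
  ultimately obtain d where "d > 0" "ball z d \<subseteq> N"
    using open_contains_ball by blast
  have space: "space M = UNIV"
    using sets_eq_imp_space_eq[OF sets] by simp
  have N_sets: "N \<in> sets M"
    using \<open>open N\<close> sets by simp
  have "AE p in M. \<phi> p = 0"
    using integral_nonneg_eq_0_iff_AE[OF int AE_I2[OF nonneg]] zero by blast
  moreover have "{p \<in> space M. \<phi> p \<noteq> 0} = N"
    using nonneg space unfolding N_def by (auto simp: less_le)
  ultimately have "emeasure M N = 0"
    using AE_iff_measurable[OF N_sets] by simp
  moreover have "0 < emeasure M (ball z d)"
    using supp \<open>d > 0\<close> unfolding mm_support_def by blast
  moreover have "emeasure M (ball z d) \<le> emeasure M N"
    using \<open>ball z d \<subseteq> N\<close> N_sets by (rule emeasure_mono)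
  ultimately show False by simp
qed

lemma lipschitz_on_dist_left: "lipschitz_on 1 UNIV (\<lambda>p. dist (x::'a::metric_space) p)"
  by (rule lipschitz_onI)
    (use abs_dist_diff_le[of _ x] in \<open>auto simp: dist_real_def dist_commute\<close>)

lemma maximal_measurement_integral_two_values:
  fixes M :: "'a::metric_space measure"
  assumes sets: "sets M = sets borel" and supp: "mm_support M = UNIV"
    and diam: "\<And>p q :: 'a. dist p q \<le> D"
    and max: "\<exists>mu \<in> measurement1 M. \<forall>nu \<in> measurement1 M. lip_prec nu mu"
  obtains A B where "\<And>h. lipschitz_on 1 UNIV h \<Longrightarrow> h x = 0 \<Longrightarrow> h y = D
    \<Longrightarrow> integral\<^sup>L M h = A \<or> integral\<^sup>L M h = B"
proof -
  obtain f where f: "lipschitz_on 1 UNIV f"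
    and f_max: "\<forall>nu \<in> measurement1 M. lip_prec nu (distr M borel f)"
    using max unfolding measurement1_def by blast
  define c where "c = Inf (mm_support (distr M borel f))"
  have measurable: "g \<in> borel_measurable M" if "lipschitz_on 1 UNIV g" for g
    using borel_measurable_continuous_on_UNIV[OF sets lipschitz_on_continuous_on[OF that]] .
  have "integral\<^sup>L M h = integral\<^sup>L M (\<lambda>p. f p - c)
      \<or> integral\<^sup>L M h = integral\<^sup>L M (\<lambda>p. c + D - f p)"
    if h: "lipschitz_on 1 UNIV h" "h x = 0" "h y = D" for h
  proof -
    have "lip_prec (distr M borel h) (distr M borel f)"
      using f_max h(1) unfolding measurement1_def by blast
    then have "distr M borel h = distr M borel (\<lambda>p. f p - c)
        \<or> distr M borel h = distr M borel (\<lambda>p. c + D - f p)"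
      using lip_prec_attaining_diameter_distr[OF sets supp diam f h] unfolding c_def by blast
    moreover have "(\<lambda>p. f p - c) \<in> borel_measurable M" "(\<lambda>p. c + D - f p) \<in> borel_measurable M"
      using measurable[OF f] by auto
    ultimately show ?thesis
      using measurable[OF h(1)] by (metis integral_eq_if_distr_eq)
  qed
  then show ?thesis
    using that by blast
qed

text \<open>The average of two functions attaining the diameter attains it as well, so their
  integrals and that of the average all lie in a two-point set.\<close>

lemma integral_eq_if_two_values:
  fixes M :: "'a::metric_space measure" and h1 h2 :: "'a \<Rightarrow> real"
  assumes "finite_measure M" and sets: "sets M = sets borel" and bounded: "bounded (UNIV :: 'a set)"
    and two_values: "\<And>h. lipschitz_on 1 UNIV h \<Longrightarrow> h x = 0 \<Longrightarrow> h y = D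
      \<Longrightarrow> integral\<^sup>L M h = A \<or> integral\<^sup>L M h = B"
    and lip1: "lipschitz_on 1 UNIV h1" and ends1: "h1 x = 0" "h1 y = D"
    and lip2: "lipschitz_on 1 UNIV h2" and ends2: "h2 x = 0" "h2 y = D"
  shows "integral\<^sup>L M h1 = integral\<^sup>L M h2"
proof -
  have lip_mid: "lipschitz_on 1 UNIV (\<lambda>p. 1/2 * (h1 p + h2 p))"
    using lipschitz_on_cmult_real_upper[OF lipschitz_on_add[OF lip1 lip2], of "1/2" "1/2"] by simp
  have "integrable M h1" "integrable M h2"
    using integrable_lipschitz_on_bounded_space[OF assms(1) sets bounded] lip1 lip2 by auto
  then have "integral\<^sup>L M (\<lambda>p. 1/2 * (h1 p + h2 p)) = 1/2 * (integral\<^sup>L M h1 + integral\<^sup>L M h2)"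
    by simp
  then have "1/2 * (integral\<^sup>L M h1 + integral\<^sup>L M h2) = A
      \<or> 1/2 * (integral\<^sup>L M h1 + integral\<^sup>L M h2) = B"
    using two_values[OF lip_mid] ends1 ends2 by simp
  then show ?thesis
    using two_values[OF lip1 ends1] two_values[OF lip2 ends2] by argo
qed

theorem theorem1p4:
  fixes M :: "'a::polish_space measure" and x y :: 'a
  assumes "prob_space M"
    and "sets M = sets borel"
    and "mm_support M = UNIV"
    and "\<exists>mu \<in> measurement1 M. \<forall>nu \<in> measurement1 M. lip_prec nu mu"
    and "bounded (UNIV :: 'a set)"
    and "dist x y = diameter (UNIV :: 'a set)"
  shows "\<forall>z. dist x z + dist z y = diameter (UNIV :: 'a set)"
proof -
  interpret prob_space M by fact
  define D where "D = diameter (UNIV :: 'a set)"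
  have sets: "sets M = sets borel" and supp: "mm_support M = UNIV" and bounded: "bounded (UNIV :: 'a set)"
    using assms(2,3,5) .
  have diam: "dist p q \<le> D" for p q :: 'a
    unfolding D_def using diameter_bounded_bound[OF bounded] by blast
  have xy: "dist x y = D"
    using assms(6) unfolding D_def .
  obtain A B where two_values: "\<And>h. lipschitz_on 1 UNIV h \<Longrightarrow> h x = 0 \<Longrightarrow> h y = D
      \<Longrightarrow> integral\<^sup>L M h = A \<or> integral\<^sup>L M h = B"
    using maximal_measurement_integral_two_values[OF sets supp diam assms(4)] by blast
  have lip_dist_x: "lipschitz_on 1 UNIV (\<lambda>p. dist x p)"
    by (rule lipschitz_on_dist_left)
  have lip_dist_y: "lipschitz_on 1 UNIV (\<lambda>p. D - dist y p)"
    using lipschitz_on_diff[OF lipschitz_on_constant lipschitz_on_dist_left] by simp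
  define \<phi> where "\<phi> p = dist x p - (D - dist y p)" for p
  have lip_\<phi>: "lipschitz_on 2 UNIV \<phi>"
    unfolding \<phi>_def using lipschitz_on_diff[OF lip_dist_x lip_dist_y] by simp
  have integrable: "integrable M g" if "lipschitz_on C UNIV g" for C and g :: "'a \<Rightarrow> real"
    using integrable_lipschitz_on_bounded_space[OF finite_measure_axioms sets bounded that] .
  have "integral\<^sup>L M (\<lambda>p. dist x p) = integral\<^sup>L M (\<lambda>p. D - dist y p)"
    using integral_eq_if_two_values[OF finite_measure_axioms sets bounded two_values lip_dist_x _ _ lip_dist_y]
    by (simp add: xy dist_commute)
  then have "integral\<^sup>L M \<phi> = 0"
    unfolding \<phi>_def using integrable[OF lip_dist_x] integrable[OF lip_dist_y] by simp
  moreover have "0 \<le> \<phi> p" for p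
    unfolding \<phi>_def using dist_triangle[of x y p] xy by (simp add: dist_commute)
  ultimately have "\<phi> z = 0" for z
    using continuous_nonneg_integral_eq_0_full_support[OF sets supp]
      lipschitz_on_continuous_on[OF lip_\<phi>] integrable[OF lip_\<phi>] by blast
  then show ?thesis
    by (simp add: \<phi>_def D_def dist_commute)
qed

end
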